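(* Let $G$ be a connected graph with $n\ge 3$ vertices and $e(G)=n+k$ edges, where $1\le k\le 10$. Let $v$ be a vertex of $G$ with $d(v)=1$. If $R(G-v)>\sqrt{n-2}+\frac{2(k+1)}{(n-1)\sqrt{n-2}}$, then $R(G)>\sqrt{n-1}+\frac{2(k+1)}{n\sqrt{n-1}}$.
   Context: All graphs are finite and simple; $e(G)$ is the number of edges and $G-v$ is the graph obtained by deleting the vertex $v$ and its incident edges. For a vertex $u$, $d(u)$ is its degree (in the graph under consideration). The Randić index is $R(G)=\sum_{\{u,v\}\in E(G)} \frac{1}{\sqrt{d(u)d(v)}}$. *)

theory Defs
  imports Complex_Main
begin

definition simple_graph :: "'a set \<Rightarrow> 'a set set \<Rightarrow> bool" where
  "simple_graph V E \<longleftrightarrow> finite V \<and> (\<forall>e\<in>E. e \<subseteq> V \<and> card e = 2)"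

definition adj_rel :: "'a set set \<Rightarrow> ('a \<times> 'a) set" where
  "adj_rel E = {(x, y). {x, y} \<in> E}"

definition connected_graph :: "'a set \<Rightarrow> 'a set set \<Rightarrow> bool" where
  "connected_graph V E \<longleftrightarrow> V \<noteq> {} \<and> (\<forall>u\<in>V. \<forall>w\<in>V. (u, w) \<in> (adj_rel E)\<^sup>*)"

definition degree :: "'a set set \<Rightarrow> 'a \<Rightarrow> nat" where
  "degree E u = card {e \<in> E. u \<in> e}"

definition randic :: "'a set set \<Rightarrow> real" where
  "randic E = (\<Sum>e\<in>E. 1 / sqrt (\<Prod>u\<in>e. real (degree E u)))"

definition del_vert_V :: "'a set \<Rightarrow> 'a \<Rightarrow> 'a set" where
  "del_vert_V V v = V - {v}"

definition del_vert_E :: "'a set set \<Rightarrow> 'a \<Rightarrow> 'a set set" where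
  "del_vert_E E v = {e \<in> E. v \<notin> e}"

end

theory Submission
  imports Defs
begin

text \<open>Deleting a pendant vertex v with neighbour u of degree d changes only the weights of
the edges at u: the edge uv contributes 1/\<surd>d, and each of the other d - 1 edges at u loses at
least 1/\<surd>(d-1) - 1/\<surd>d, because its other endpoint has degree at least 1.
Hence R(G) - R(G-v) \<ge> \<surd>d - \<surd>(d-1), which decreases in d; connectivity and n \<ge> 3 give
2 \<le> d \<le> n - 1, so R(G) - R(G-v) \<ge> \<surd>(n-1) - \<surd>(n-2). The remaining term only has to pass
from 2(k+1)/((n-1)\<surd>(n-2)) to the smaller 2(k+1)/(n\<surd>(n-1)).\<close>

lemma inv_sqrt_mult_diff_ge:
  fixes d p :: real
  assumes "d \<ge> 2" "p \<ge> 1"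
  shows "1 / sqrt (d * p) - 1 / sqrt ((d - 1) * p) \<ge> 1 / sqrt d - 1 / sqrt (d - 1)"
proof -
  define a where "a = 1 / sqrt d - 1 / sqrt (d - 1)"
  have "sqrt p \<ge> 1"
    using assms by simp
  moreover have "a \<le> 0"
    unfolding a_def using assms by (simp add: frac_le)
  ultimately have "a * sqrt p \<le> a * 1"
    by (rule mult_left_mono_neg)
  then have "a \<le> a / sqrt p"
    using \<open>sqrt p \<ge> 1\<close> by (simp add: le_divide_eq)
  also have "a / sqrt p = 1 / sqrt (d * p) - 1 / sqrt ((d - 1) * p)"
    unfolding a_def by (simp add: real_sqrt_mult diff_divide_distrib)
  finally show ?thesis
    unfolding a_def .
qed

lemma sqrt_diff_pred_eq:
  fixes x :: real
  assumes "x \<ge> 1"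
  shows "sqrt x - sqrt (x - 1) = 1 / (sqrt x + sqrt (x - 1))"
proof -
  have "(sqrt x - sqrt (x - 1)) * (sqrt x + sqrt (x - 1)) = 1"
    using assms by (simp add: algebra_simps)
  moreover have "sqrt x + sqrt (x - 1) > 0"
    using assms by (simp add: add_pos_nonneg)
  ultimately show ?thesis
    by (simp add: field_simps)
qed

lemma sqrt_diff_pred_antimono:
  fixes d m :: real
  assumes "1 \<le> d" "d \<le> m"
  shows "sqrt m - sqrt (m - 1) \<le> sqrt d - sqrt (d - 1)"
proof -
  have "sqrt d + sqrt (d - 1) \<le> sqrt m + sqrt (m - 1)"
    using assms by (simp add: add_mono)
  moreover have "sqrt d + sqrt (d - 1) > 0"
    using assms by (simp add: add_pos_nonneg)
  ultimately show ?thesis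
    using assms sqrt_diff_pred_eq[of d] sqrt_diff_pred_eq[of m] by (simp add: frac_le)
qed

lemma inv_sqrt_telescope:
  fixes d :: real
  assumes "d \<ge> 1"
  shows "1 / sqrt d + (d - 1) * (1 / sqrt d - 1 / sqrt (d - 1)) = sqrt d - sqrt (d - 1)"
proof -
  have "1 / sqrt d + (d - 1) * (1 / sqrt d - 1 / sqrt (d - 1))
      = d / sqrt d - (d - 1) / sqrt (d - 1)"
    by (simp add: algebra_simps add_divide_distrib[symmetric] diff_divide_distrib)
  also have "\<dots> = sqrt d - sqrt (d - 1)"
    using assms by (simp add: real_div_sqrt)
  finally show ?thesis .
qed

lemma card_2_obtain_other:
  assumes "card e = 2" "x \<in> e"
  obtains y where "y \<noteq> x" "e = {x, y}"
proof -
  obtain a b where "e = {a, b}" "a \<noteq> b"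
    using assms(1) by (metis card_2_iff)
  then show ?thesis
    using assms(2) that by (metis insert_commute insertE singletonD)
qed

lemma simple_graph_finite_edges:
  assumes "simple_graph V E"
  shows "finite E"
  using assms unfolding simple_graph_def by (meson Pow_iff finite_Pow_iff finite_subset subsetI)

lemma degree_ge_1:
  assumes "finite E" "e \<in> E" "x \<in> e"
  shows "degree E x \<ge> 1"
  using assms unfolding degree_def One_nat_def Suc_le_eq card_gt_0_iff by auto

lemma degree_le_card_minus_1:
  assumes "simple_graph V E" "u \<in> V"
  shows "degree E u \<le> card V - 1"
proof -
  have "{e \<in> E. u \<in> e} \<subseteq> (\<lambda>w. {u, w}) ` (V - {u})"
  proof
    fix e
    assume "e \<in> {e \<in> E. u \<in> e}"
    then have "card e = 2" "e \<subseteq> V" "u \<in> e"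
      using assms(1) unfolding simple_graph_def by auto
    then obtain w where "w \<noteq> u" "e = {u, w}"
      by (meson card_2_obtain_other)
    with \<open>e \<subseteq> V\<close> show "e \<in> (\<lambda>w. {u, w}) ` (V - {u})"
      by auto
  qed
  moreover have "finite V"
    using assms(1) unfolding simple_graph_def by blast
  ultimately have "degree E u \<le> card ((\<lambda>w. {u, w}) ` (V - {u}))"
    unfolding degree_def by (simp add: card_mono)
  also have "\<dots> \<le> card (V - {u})"
    using \<open>finite V\<close> by (simp add: card_image_le)
  finally show ?thesis
    using assms(2) \<open>finite V\<close> by simp
qed

lemma degree_1_pendant_edge:
  assumes "simple_graph V E" "degree E v = 1"
  obtains u where "u \<noteq> v" "{e \<in> E. v \<in> e} = {{v, u}}"
proof -
  obtain e0 where e0: "{e \<in> E. v \<in> e} = {e0}"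
    using assms(2) unfolding degree_def by (rule card_1_singletonE)
  then have "card e0 = 2" "v \<in> e0"
    using assms(1) unfolding simple_graph_def by auto
  then obtain u where "u \<noteq> v" "e0 = {v, u}"
    by (rule card_2_obtain_other)
  then show ?thesis
    using e0 that by blast
qed

definition edge_weight :: "'a set set \<Rightarrow> 'a set \<Rightarrow> real" where
  "edge_weight F e = 1 / sqrt (\<Prod>x\<in>e. real (degree F x))"

lemma randic_eq_sum_edge_weight: "randic F = (\<Sum>e\<in>F. edge_weight F e)"
  unfolding randic_def edge_weight_def ..

locale pendant_vertex =
  fixes V :: "'a set" and E :: "'a set set" and v u :: 'a
  assumes graph: "simple_graph V E"
    and pendant_edges: "{e \<in> E. v \<in> e} = {{v, u}}"
begin

lemma finite_E: "finite E"
  using graph by (rule simple_graph_finite_edges)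

lemma pendant_edge_in: "{v, u} \<in> E"
  using pendant_edges by blast

lemma neighbour_ne: "u \<noteq> v"
  using pendant_edge_in graph unfolding simple_graph_def by force

lemma neighbour_in_V: "u \<in> V"
  using pendant_edge_in graph unfolding simple_graph_def by blast

lemma degree_pendant: "degree E v = 1"
  unfolding degree_def pendant_edges by simp

lemma del_vert_E_eq: "del_vert_E E v = E - {{v, u}}"
  unfolding del_vert_E_def using pendant_edges by blast

lemma degree_del_other:
  assumes "x \<noteq> u" "x \<noteq> v"
  shows "degree (del_vert_E E v) x = degree E x"
proof -
  have "{e \<in> del_vert_E E v. x \<in> e} = {e \<in> E. x \<in> e}"
    using assms unfolding del_vert_E_eq by auto
  then show ?thesis
    unfolding degree_def by simp
qed

lemma degree_del_neighbour: "degree (del_vert_E E v) u = degree E u - 1"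
proof -
  have "{e \<in> del_vert_E E v. u \<in> e} = {e \<in> E. u \<in> e} - {{v, u}}"
    unfolding del_vert_E_eq by auto
  then show ?thesis
    unfolding degree_def using finite_E pendant_edge_in by (simp add: card_Diff_singleton)
qed

lemma edges_at_neighbour_of_degree_1:
  assumes "degree E u = 1"
  shows "{e \<in> E. u \<in> e} = {{v, u}}"
proof -
  obtain e1 where e1: "{e \<in> E. u \<in> e} = {e1}"
    using assms unfolding degree_def by (rule card_1_singletonE)
  moreover have "{v, u} \<in> {e \<in> E. u \<in> e}"
    using pendant_edge_in by simp
  ultimately show ?thesis
    by simp
qed

lemma reachable_from_pendant:
  assumes "degree E u = 1" "(v, w) \<in> (adj_rel E)\<^sup>*"
  shows "w \<in> {u, v}"
  using assms(2)
proof (induction rule: rtrancl_induct)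
  case base
  then show ?case by simp
next
  case (step x y)
  have xy: "{x, y} \<in> E"
    using step.hyps(2) unfolding adj_rel_def by simp
  have "{x, y} \<in> {e \<in> E. v \<in> e} \<union> {e \<in> E. u \<in> e}"
    using xy step.IH by auto
  then have "{x, y} = {v, u}"
    unfolding pendant_edges edges_at_neighbour_of_degree_1[OF assms(1)] by simp
  then show ?case
    by auto
qed

lemma neighbour_degree_ge_2:
  assumes "connected_graph V E" "card V \<ge> 3"
  shows "degree E u \<ge> 2"
proof (rule ccontr)
  assume "\<not> degree E u \<ge> 2"
  then have "degree E u = 1"
    using degree_ge_1[OF finite_E pendant_edge_in, of u] by simp
  moreover have "v \<in> V"
    using pendant_edge_in graph unfolding simple_graph_def by blast
  ultimately have "V \<subseteq> {u, v}"
    using assms(1) reachable_from_pendant unfolding connected_graph_def by blast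
  then have "card V \<le> card {u, v}"
    by (simp add: card_mono)
  also have "\<dots> = 2"
    using neighbour_ne by simp
  finally show False
    using assms(2) by simp
qed

lemma edge_weight_pendant: "edge_weight E {v, u} = 1 / sqrt (real (degree E u))"
  unfolding edge_weight_def using neighbour_ne degree_pendant by simp

lemma edge_weight_del_unchanged:
  assumes "e \<in> del_vert_E E v" "u \<notin> e"
  shows "edge_weight (del_vert_E E v) e = edge_weight E e"
proof -
  have "v \<notin> e"
    using assms(1) unfolding del_vert_E_def by simp
  then show ?thesis
    unfolding edge_weight_def using assms(2) degree_del_other
    by (metis (no_types, lifting) prod.cong)
qed

lemma edge_weight_del_at_neighbour:
  assumes "e \<in> del_vert_E E v" "u \<in> e" "degree E u \<ge> 2"
  defines "d \<equiv> real (degree E u)"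
  shows "edge_weight E e - edge_weight (del_vert_E E v) e \<ge> 1 / sqrt d - 1 / sqrt (d - 1)"
proof -
  have "e \<in> E" "v \<notin> e"
    using assms(1) unfolding del_vert_E_def by auto
  then have "finite e"
    using graph unfolding simple_graph_def by (metis card.infinite zero_neq_numeral)
  define p where "p = (\<Prod>x\<in>e - {u}. real (degree E x))"
  have "p \<ge> 1"
    unfolding p_def using degree_ge_1[OF finite_E \<open>e \<in> E\<close>] by (intro prod_ge_1) auto
  have "(\<Prod>x\<in>e - {u}. real (degree (del_vert_E E v) x)) = p"
    unfolding p_def using degree_del_other \<open>v \<notin> e\<close> by (intro prod.cong) auto
  then have "edge_weight (del_vert_E E v) e = 1 / sqrt ((d - 1) * p)"
    unfolding edge_weight_def d_def
    using \<open>finite e\<close> assms(2,3) degree_del_neighbour by (simp add: prod.remove of_nat_diff)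
  moreover have "edge_weight E e = 1 / sqrt (d * p)"
    unfolding edge_weight_def d_def p_def using \<open>finite e\<close> assms(2) by (simp add: prod.remove)
  ultimately show ?thesis
    using inv_sqrt_mult_diff_ge[OF _ \<open>p \<ge> 1\<close>] assms(3) unfolding d_def by simp
qed

lemma randic_del_pendant_ge:
  assumes "degree E u \<ge> 2"
  defines "d \<equiv> real (degree E u)"
  shows "randic E \<ge> randic (del_vert_E E v) + (sqrt d - sqrt (d - 1))"
proof -
  let ?E' = "del_vert_E E v"
  define A where "A = {e \<in> ?E'. u \<in> e}"
  define B where "B = {e \<in> ?E'. u \<notin> e}"
  have fin: "finite A" "finite B" "A \<inter> B = {}" "?E' = A \<union> B"
    using finite_E unfolding A_def B_def del_vert_E_def by auto
  have "card A = degree E u - 1"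
    using degree_del_neighbour unfolding A_def degree_def by simp
  then have "(d - 1) * (1 / sqrt d - 1 / sqrt (d - 1))
      \<le> (\<Sum>e\<in>A. edge_weight E e - edge_weight ?E' e)"
    using sum_mono[of A "\<lambda>_. 1 / sqrt d - 1 / sqrt (d - 1)"] edge_weight_del_at_neighbour assms
    unfolding A_def d_def by (simp add: of_nat_diff)
  moreover have "(\<Sum>e\<in>B. edge_weight ?E' e) = (\<Sum>e\<in>B. edge_weight E e)"
    using edge_weight_del_unchanged unfolding B_def by simp
  moreover have "randic E = edge_weight E {v, u} + (\<Sum>e\<in>?E'. edge_weight E e)"
    unfolding randic_eq_sum_edge_weight del_vert_E_eq
    using finite_E pendant_edge_in by (simp add: sum.remove)
  ultimately have "randic E \<ge> randic ?E' + 1 / sqrt d + (d - 1) * (1 / sqrt d - 1 / sqrt (d - 1))"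
    unfolding randic_eq_sum_edge_weight edge_weight_pendant d_def fin(4)
    using fin by (simp add: sum.union_disjoint sum_subtractf)
  then show ?thesis
    using inv_sqrt_telescope[of d] assms unfolding d_def by simp
qed

end

theorem lemma2p10:
  fixes V :: "'a set" and E :: "'a set set" and n k :: nat and v :: 'a
  assumes "simple_graph V E"
    and "connected_graph V E"
    and "card V = n" and "n \<ge> 3"
    and "card E = n + k" and "1 \<le> k" and "k \<le> 10"
    and "v \<in> V" and "degree E v = 1"
    and "randic (del_vert_E E v) >
           sqrt (real n - 2) + 2 * (real k + 1) / ((real n - 1) * sqrt (real n - 2))"
  shows "randic E > sqrt (real n - 1) + 2 * (real k + 1) / (real n * sqrt (real n - 1))"
proof -
  obtain u where "pendant_vertex V E v u"
    using degree_1_pendant_edge[OF assms(1,9)] assms(1) by (metis pendant_vertex.intro)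
  then interpret pendant_vertex V E v u .
  define d where "d = real (degree E u)"
  have "2 \<le> d" "d \<le> real n - 1"
    using neighbour_degree_ge_2[OF assms(2)] degree_le_card_minus_1[OF graph neighbour_in_V]
      assms(3,4) unfolding d_def by linarith+
  then have "randic E \<ge> randic (del_vert_E E v) + (sqrt (real n - 1) - sqrt (real n - 2))"
    using randic_del_pendant_ge neighbour_degree_ge_2[OF assms(2)] assms(3,4)
      sqrt_diff_pred_antimono[of d "real n - 1"] unfolding d_def by fastforce
  moreover have "(real n - 1) * sqrt (real n - 2) < real n * sqrt (real n - 1)"
    using assms(4) by (intro mult_less_le_imp_less) auto
  then have "2 * (real k + 1) / (real n * sqrt (real n - 1))
      < 2 * (real k + 1) / ((real n - 1) * sqrt (real n - 2))"
    using assms(4) by (intro divide_strict_left_mono) auto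
  ultimately show ?thesis
    using assms(10) by linarith
qed

end
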